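(* Let $n\ge m\ge 2$ and let $\bm W\in\mathbb{R}^{m\times n}$ satisfy $\bm W\bm W^T=\bm I_m$ and $\bm\xi_m^T\bm W\bm\xi_n=1$. Let $\bm w_i^T$ denote the $i$-th row of $\bm W$, and define $\bm h_i:=\bm w_i-\operatorname{proj}_{\bm\xi_n}(\bm w_i)=\bm w_i-(\bm w_i^T\bm\xi_n)\bm\xi_n$ for $i=1,\dots,m$, and $\bm H=[\bm h_1\ \cdots\ \bm h_m]\in\mathbb{R}^{n\times m}$. Then for all $i,j\in\{1,\dots,m\}$, \[ (\bm H^T\bm H)_{ij}=\bm h_i^T\bm h_j=\begin{cases}\frac{m-1}{m}, & i=j,\\ -\frac1m, & i\ne j.\end{cases} \]
   Context: $\bm 1_k$ denotes the all-ones vector in $\mathbb{R}^k$ and $\bm\xi_k=\frac{1}{\sqrt k}\bm 1_k$. *)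

theory Defs
  imports "HOL-Analysis.Analysis"
begin

definition xi_vec :: "real ^ 'k" where
  "xi_vec = (\<chi> i. 1 / sqrt (real CARD('k)))"

text \<open>Orthogonal projection of v onto the span of the unit vector u.\<close>
definition proj_onto :: "real ^ 'k \<Rightarrow> real ^ 'k \<Rightarrow> real ^ 'k" where
  "proj_onto u v = (v \<bullet> u) *\<^sub>R u"

end

theory Submission
  imports Defs
begin

text \<open>Write \<open>y = W \<xi>\<^sub>n\<close>. Since \<open>W\<close> has orthonormal rows it does not increase norms,
  so \<open>\<parallel>y\<parallel> \<le> 1 = \<parallel>\<xi>\<^sub>m\<parallel>\<close>; together with \<open>\<xi>\<^sub>m \<bullet> y = 1\<close> this is the equality case of
  Cauchy-Schwarz, hence \<open>y = \<xi>\<^sub>m\<close>, i.e. every row satisfies \<open>w\<^sub>i \<bullet> \<xi>\<^sub>n = 1/\<surd>m\<close>.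
  Removing the \<open>\<xi>\<^sub>n\<close>-components then gives
  \<open>h\<^sub>i \<bullet> h\<^sub>j = w\<^sub>i \<bullet> w\<^sub>j - (w\<^sub>i \<bullet> \<xi>\<^sub>n)(w\<^sub>j \<bullet> \<xi>\<^sub>n) = \<delta>\<^sub>i\<^sub>j - 1/m\<close>.\<close>

lemma xi_vec_nth: "(xi_vec :: real ^ 'k) $ i = 1 / sqrt (real CARD('k))"
  by (simp add: xi_vec_def)

lemma inner_xi_vec_self: "(xi_vec :: real ^ 'k) \<bullet> xi_vec = 1"
  by (simp add: inner_vec_def xi_vec_nth power_divide flip: power2_eq_square)

lemma norm_xi_vec: "norm (xi_vec :: real ^ 'k) = 1"
  by (simp add: norm_eq_sqrt_inner inner_xi_vec_self)

lemma inner_proj_onto_complement: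
  assumes "u \<bullet> u = 1"
  shows "(v - proj_onto u v) \<bullet> (w - proj_onto u w) = v \<bullet> w - (v \<bullet> u) * (w \<bullet> u)"
  using assms
  by (simp add: proj_onto_def inner_diff_left inner_diff_right inner_commute algebra_simps)

lemma eq_of_inner_eq_one:
  fixes u v :: "'a::real_inner"
  assumes "norm u = 1" and "norm v \<le> 1" and "u \<bullet> v = 1"
  shows "v = u"
proof -
  have "norm (u - v)^2 = norm u ^ 2 - 2 * (u \<bullet> v) + norm v ^ 2"
    by (simp add: power2_norm_eq_inner inner_diff_left inner_diff_right inner_commute)
  also have "\<dots> \<le> 0"
    using assms by (simp add: power_le_one)
  finally show ?thesis by simp
qed

lemma inner_rows_orthonormal:
  fixes W :: "real ^ 'n ^ 'm"
  assumes "W ** transpose W = mat 1"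
  shows "W $ i \<bullet> W $ j = (if i = j then 1 else 0)"
proof -
  have "W $ i \<bullet> W $ j = (W ** transpose W) $ i $ j"
    by (simp add: matrix_mult_transpose_dot_row row_def vec_nth_inverse)
  with assms show ?thesis by (simp add: mat_def)
qed

lemma norm_transpose_mult_orthonormal_rows:
  fixes W :: "real ^ 'n ^ 'm"
  assumes "W ** transpose W = mat 1"
  shows "norm (transpose W *v y) = norm y"
proof -
  have "W *v (transpose W *v y) = y"
    by (simp only: matrix_vector_mul_assoc assms matrix_vector_mul_lid)
  moreover have "(transpose W *v y) \<bullet> (transpose W *v y) = y \<bullet> (W *v (transpose W *v y))"
    using dot_lmul_matrix[of y W] by (simp only: transpose_matrix_vector)
  ultimately show ?thesis
    by (simp add: norm_eq_sqrt_inner)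
qed

lemma norm_mult_orthonormal_rows_le:
  fixes W :: "real ^ 'n ^ 'm"
  assumes "W ** transpose W = mat 1"
  shows "norm (W *v x) \<le> norm x"
proof -
  let ?y = "W *v x"
  have "norm ?y * norm ?y = ?y \<bullet> (W *v x)"
    by (simp add: power2_norm_eq_inner flip: power2_eq_square)
  also have "\<dots> = (transpose W *v ?y) \<bullet> x"
    by (simp add: dot_lmul_matrix)
  also have "\<dots> \<le> norm ?y * norm x"
    using norm_cauchy_schwarz[of "transpose W *v ?y" x]
    by (simp only: norm_transpose_mult_orthonormal_rows[OF assms])
  finally show ?thesis
    using mult_le_cancel_left_pos[of "norm ?y"] by fastforce
qed

theorem proposition2:
  fixes W :: "real ^ 'n ^ 'm"
    and H :: "real ^ 'm ^ 'n"
  assumes "CARD('n) \<ge> CARD('m)" and "CARD('m) \<ge> 2"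
    and "W ** transpose W = mat 1"
    and "(xi_vec :: real ^ 'm) \<bullet> (W *v (xi_vec :: real ^ 'n)) = 1"
    and "\<forall>i. column i H = W $ i - proj_onto (xi_vec :: real ^ 'n) (W $ i)"
  shows "\<forall>i j. (transpose H ** H) $ i $ j = column i H \<bullet> column j H
           \<and> (transpose H ** H) $ i $ j =
               (if i = j then (real CARD('m) - 1) / real CARD('m) else - 1 / real CARD('m))"
proof -
  let ?\<xi>\<^sub>n = "xi_vec :: real ^ 'n" and ?m = "real CARD('m)"
  have "norm (W *v ?\<xi>\<^sub>n) \<le> 1"
    using norm_mult_orthonormal_rows_le[OF assms(3)] by (metis norm_xi_vec)
  then have "W *v ?\<xi>\<^sub>n = xi_vec"
    by (rule eq_of_inner_eq_one[OF norm_xi_vec _ assms(4)])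
  then have row_xi: "W $ i \<bullet> ?\<xi>\<^sub>n = 1 / sqrt ?m" for i
    by (metis matrix_mult_dot vec_lambda_beta xi_vec_nth)
  have "column i H \<bullet> column j H = (if i = j then (?m - 1) / ?m else - 1 / ?m)" for i j
  proof -
    have "column i H \<bullet> column j H = W $ i \<bullet> W $ j - (W $ i \<bullet> ?\<xi>\<^sub>n) * (W $ j \<bullet> ?\<xi>\<^sub>n)"
      unfolding assms(5)[rule_format] by (rule inner_proj_onto_complement[OF inner_xi_vec_self])
    also have "\<dots> = (if i = j then 1 else 0) - 1 / ?m"
      unfolding row_xi inner_rows_orthonormal[OF assms(3)] by simp
    finally show ?thesis
      by (simp add: diff_divide_distrib)
  qed
  then show ?thesis
    by (simp add: matrix_mult_transpose_dot_column)
qed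

end
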